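(* Consider the ODE system $$\frac{du}{dt}=\frac{a_1u}{1+fv}-b_1u^2-c_1uv,\qquad \frac{dv}{dt}=a_2v-b_2v^2-c_2uv,$$ with positive parameters $a_1,a_2,b_1,b_2,c_1,c_2$. For every value of $f\ge0$, the system has no periodic orbits in the nonnegative quadrant $\{u\ge0,v\ge0\}$.
   Context: The state space is the biologically feasible nonnegative quadrant of population densities. *)

theory Defs
  imports "HOL-Analysis.Analysis"
begin

definition Fu :: "real \<Rightarrow> real \<Rightarrow> real \<Rightarrow> real \<Rightarrow> real \<Rightarrow> real \<Rightarrow> real" where
  "Fu a1 b1 c1 f u v = a1 * u / (1 + f * v) - b1 * u^2 - c1 * u * v"

definition Fv :: "real \<Rightarrow> real \<Rightarrow> real \<Rightarrow> real \<Rightarrow> real \<Rightarrow> real" where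
  "Fv a2 b2 c2 u v = a2 * v - b2 * v^2 - c2 * u * v"

definition is_solution ::
  "real \<Rightarrow> real \<Rightarrow> real \<Rightarrow> real \<Rightarrow> real \<Rightarrow> real \<Rightarrow> real \<Rightarrow> (real \<Rightarrow> real) \<Rightarrow> (real \<Rightarrow> real) \<Rightarrow> bool" where
  "is_solution a1 a2 b1 b2 c1 c2 f u v \<longleftrightarrow>
     (\<forall>t. (u has_real_derivative Fu a1 b1 c1 f (u t) (v t)) (at t) \<and>
          (v has_real_derivative Fv a2 b2 c2 (u t) (v t)) (at t))"

definition periodic_orbit ::
  "real \<Rightarrow> real \<Rightarrow> real \<Rightarrow> real \<Rightarrow> real \<Rightarrow> real \<Rightarrow> real \<Rightarrow> (real \<Rightarrow> real) \<Rightarrow> (real \<Rightarrow> real) \<Rightarrow> bool" where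
  "periodic_orbit a1 a2 b1 b2 c1 c2 f u v \<longleftrightarrow>
     is_solution a1 a2 b1 b2 c1 c2 f u v \<and>
     (\<exists>T>0. \<forall>t. u (t + T) = u t \<and> v (t + T) = v t) \<and>
     (\<exists>t. (u t, v t) \<noteq> (u 0, v 0))"

end

theory Submission
  imports Defs
begin

text \<open>
  Along a periodic orbit the velocity (u', v') solves the linearised system, whose off-diagonal
  coefficients \<open>B = -a1 f u / (1 + f v)\<^sup>2 - c1 u\<close> and \<open>C = -c2 v\<close> are negative once
  u, v > 0: the system is competitive. By Gronwall's inequality a periodic solution of a linear
  system that vanishes once vanishes identically; hence the velocity of a nonconstant orbit never
  vanishes, and neither u nor v vanishes anywhere (otherwise, say, u' = 0 everywhere while v' = 0
  at a critical point of v). At a zero of the product u' v' its derivative is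
  \<open>B v'\<^sup>2 + C u'\<^sup>2 < 0\<close>, so after a critical point of u the product stays negative for ever;
  but the periodic function u has another critical point within one period.
\<close>

lemma periodic_add_multiple:
  fixes w :: "real \<Rightarrow> 'a"
  assumes "\<And>t. w (t + T) = w t"
  shows "w (t + real n * T) = w t"
proof (induction n)
  case (Suc n)
  have "w (t + real (Suc n) * T) = w ((t + real n * T) + T)"
    by (simp add: algebra_simps)
  with Suc assms show ?case by simp
qed simp

lemma periodic_has_critical_point:
  fixes w w' :: "real \<Rightarrow> real"
  assumes "T > 0" and periodic: "\<And>t. w (t + T) = w t"
    and deriv: "\<And>t. (w has_real_derivative w' t) (at t)"
  shows "\<exists>\<xi>. s < \<xi> \<and> \<xi> < s + T \<and> w' \<xi> = 0"
proof -
  have "continuous_on {s..s + T} w"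
    using deriv by (meson DERIV_isCont continuous_at_imp_continuous_on)
  then obtain \<xi> where "s < \<xi>" "\<xi> < s + T" "(w has_real_derivative 0) (at \<xi>)"
    using Rolle[of s "s + T" w] \<open>T > 0\<close> periodic deriv real_differentiable_def by force
  then show ?thesis
    using DERIV_unique deriv by blast
qed

lemma vanishes_forward_of_linear_bound:
  fixes w w' k :: "real \<Rightarrow> real"
  assumes deriv: "\<And>t. (w has_real_derivative w' t) (at t)"
    and bound: "\<And>t. \<bar>w' t\<bar> \<le> k t * \<bar>w t\<bar>"
    and cont: "continuous_on {t0..t} k"
    and "w t0 = 0" "t0 \<le> t"
  shows "w t = 0"
proof -
  obtain m where "m \<in> {t0..t}" and k_le: "\<And>r. r \<in> {t0..t} \<Longrightarrow> k r \<le> k m"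
    using continuous_attains_sup[OF compact_Icc _ cont] \<open>t0 \<le> t\<close> by auto
  define K where "K = k m"
  define \<phi> where "\<phi> r = (w r)\<^sup>2 * exp (- 2 * K * r)" for r
  have "\<phi> t \<le> \<phi> t0"
  proof (rule DERIV_nonpos_imp_nonincreasing[OF \<open>t0 \<le> t\<close>])
    fix r assume r: "t0 \<le> r" "r \<le> t"
    have "w r * w' r \<le> \<bar>w r\<bar> * (k r * \<bar>w r\<bar>)"
      by (metis abs_ge_self abs_mult abs_ge_zero bound mult_left_mono order_trans)
    also have "\<dots> = k r * (w r)\<^sup>2"
      by (simp add: power2_eq_square abs_mult_self_eq)
    also have "\<dots> \<le> K * (w r)\<^sup>2"
      using k_le[of r] r unfolding K_def by (simp add: mult_right_mono)
    finally have "w r * w' r - K * (w r)\<^sup>2 \<le> 0" by simp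
    moreover have "(\<phi> has_real_derivative 2 * exp (- 2 * K * r) * (w r * w' r - K * (w r)\<^sup>2)) (at r)"
      unfolding \<phi>_def
      by (rule derivative_eq_intros deriv refl)+ (simp add: algebra_simps power2_eq_square)
    ultimately show "\<exists>l. (\<phi> has_real_derivative l) (at r) \<and> l \<le> 0"
      by (meson exp_gt_zero mult_nonneg_nonpos zero_le_mult_iff less_imp_le zero_le_numeral)
  qed
  then have "(w t)\<^sup>2 * exp (- 2 * K * t) \<le> 0"
    using \<open>w t0 = 0\<close> unfolding \<phi>_def by simp
  then show "w t = 0"
    by (simp add: mult_le_0_iff)
qed

lemma periodic_vanishes_of_linear_bound:
  fixes w w' k :: "real \<Rightarrow> real"
  assumes "T > 0" and periodic: "\<And>t. w (t + T) = w t"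
    and deriv: "\<And>t. (w has_real_derivative w' t) (at t)"
    and bound: "\<And>t. \<bar>w' t\<bar> \<le> k t * \<bar>w t\<bar>"
    and cont: "\<And>t. isCont k t"
    and "w t0 = 0"
  shows "w t = 0"
proof -
  obtain n where "(t0 - t) / T \<le> real n"
    using real_arch_simple by blast
  then have "t0 \<le> t + real n * T"
    using \<open>T > 0\<close> by (simp add: pos_divide_le_eq)
  then have "w (t + real n * T) = 0"
    using vanishes_forward_of_linear_bound[OF deriv bound _ \<open>w t0 = 0\<close>] cont
    by (simp add: continuous_at_imp_continuous_on)
  then show ?thesis
    using periodic_add_multiple[where w = w, OF periodic] by simp
qed

lemma quadratic_form_abs_le:
  fixes x y A B C D :: real
  shows "\<bar>x * (A * x + B * y) + y * (C * x + D * y)\<bar> \<le> (\<bar>A\<bar> + \<bar>B + C\<bar> + \<bar>D\<bar>) * (x\<^sup>2 + y\<^sup>2)"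
proof -
  have "0 \<le> (\<bar>x\<bar> - \<bar>y\<bar>)\<^sup>2 + \<bar>x\<bar> * \<bar>y\<bar>"
    by simp
  then have xy: "\<bar>x * y\<bar> \<le> x\<^sup>2 + y\<^sup>2"
    by (simp add: power2_diff abs_mult)
  have "\<bar>x * (A * x + B * y) + y * (C * x + D * y)\<bar> = \<bar>A * x\<^sup>2 + (B + C) * (x * y) + D * y\<^sup>2\<bar>"
    by (simp add: algebra_simps power2_eq_square)
  also have "\<dots> \<le> \<bar>A * x\<^sup>2\<bar> + \<bar>(B + C) * (x * y)\<bar> + \<bar>D * y\<^sup>2\<bar>"
    by linarith
  also have "\<dots> = \<bar>A\<bar> * x\<^sup>2 + \<bar>B + C\<bar> * \<bar>x * y\<bar> + \<bar>D\<bar> * y\<^sup>2"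
    by (simp add: abs_mult)
  also have "\<dots> \<le> \<bar>A\<bar> * (x\<^sup>2 + y\<^sup>2) + \<bar>B + C\<bar> * (x\<^sup>2 + y\<^sup>2) + \<bar>D\<bar> * (x\<^sup>2 + y\<^sup>2)"
    by (intro add_mono mult_left_mono xy) auto
  finally show ?thesis
    by (simp add: algebra_simps)
qed

lemma periodic_linear_system_vanishes:
  fixes x y A B C D :: "real \<Rightarrow> real"
  assumes "T > 0"
    and periodic: "\<And>t. x (t + T) = x t" "\<And>t. y (t + T) = y t"
    and dx: "\<And>t. (x has_real_derivative A t * x t + B t * y t) (at t)"
    and dy: "\<And>t. (y has_real_derivative C t * x t + D t * y t) (at t)"
    and cont: "\<And>t. isCont A t" "\<And>t. isCont B t" "\<And>t. isCont C t" "\<And>t. isCont D t"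
    and "x t0 = 0" "y t0 = 0"
  shows "x t = 0 \<and> y t = 0"
proof -
  define W where "W t = (x t)\<^sup>2 + (y t)\<^sup>2" for t
  define W' where "W' t = 2 * (x t * (A t * x t + B t * y t) + y t * (C t * x t + D t * y t))" for t
  have "W t = 0"
  proof (rule periodic_vanishes_of_linear_bound[where w = W and w' = W', OF \<open>T > 0\<close>])
    show "W (t + T) = W t" for t
      unfolding W_def using periodic by simp
    show "(W has_real_derivative W' t) (at t)" for t
      unfolding W_def W'_def
      by (rule derivative_eq_intros dx dy refl)+ (simp add: algebra_simps)
    show "\<bar>W' t\<bar> \<le> 2 * (\<bar>A t\<bar> + \<bar>B t + C t\<bar> + \<bar>D t\<bar>) * \<bar>W t\<bar>" for t
      using quadratic_form_abs_le[of "x t" "A t" "B t" "y t" "C t" "D t"]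
      unfolding W_def W'_def abs_mult by (simp add: algebra_simps)
    show "isCont (\<lambda>t. 2 * (\<bar>A t\<bar> + \<bar>B t + C t\<bar> + \<bar>D t\<bar>)) t" for t
      using cont by (auto intro!: continuous_intros)
    show "W t0 = 0"
      unfolding W_def using \<open>x t0 = 0\<close> \<open>y t0 = 0\<close> by simp
  qed
  then show ?thesis
    unfolding W_def by (simp add: add_nonneg_eq_0_iff)
qed

lemma negative_persists_of_deriv_neg_at_zeros:
  fixes g g' :: "real \<Rightarrow> real"
  assumes deriv: "\<And>t. (g has_real_derivative g' t) (at t)"
    and crossing: "\<And>t. g t = 0 \<Longrightarrow> g' t < 0"
    and "g s < 0" "s \<le> t"
  shows "g t < 0"
proof (rule ccontr)
  assume "\<not> g t < 0"
  have cont: "continuous_on {s..t} g"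
    using deriv by (meson DERIV_isCont continuous_at_imp_continuous_on)
  define Z where "Z = {s..t} \<inter> g -` {0}"
  have "Z \<noteq> {}"
    using IVT'[of g s 0 t] \<open>\<not> g t < 0\<close> \<open>g s < 0\<close> \<open>s \<le> t\<close> cont unfolding Z_def by force
  moreover have "bdd_below Z"
    unfolding Z_def by (auto intro: bdd_belowI)
  moreover have "closed Z"
    unfolding Z_def using cont by (intro continuous_closed_preimage) auto
  ultimately have "Inf Z \<in> Z"
    by (rule closed_contains_Inf)
  define z where "z = Inf Z"
  have "s < z" "g z = 0"
    using \<open>Inf Z \<in> Z\<close> \<open>g s < 0\<close> unfolding z_def Z_def by (auto simp: order_le_less)
  obtain d where "d > 0" and left: "\<And>h. 0 < h \<Longrightarrow> h < d \<Longrightarrow> g (z - h) > 0"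
    using DERIV_neg_dec_left[OF deriv crossing[OF \<open>g z = 0\<close>]] \<open>g z = 0\<close> by auto
  obtain h where "0 < h" "h < d" "h < z - s"
    using field_lbound_gt_zero[of d "z - s"] \<open>d > 0\<close> \<open>s < z\<close> by auto
  define r where "r = z - h"
  have "s < r" "r < z" "g r > 0"
    unfolding r_def using \<open>0 < h\<close> \<open>h < d\<close> \<open>h < z - s\<close> by (auto intro: left)
  then obtain q where "s \<le> q" "q \<le> r" "g q = 0"
    using IVT'[of g s 0 r] \<open>g s < 0\<close> cont \<open>Inf Z \<in> Z\<close>
    by (force intro: continuous_on_subset simp: Z_def z_def)
  then have "q \<in> Z"
    using \<open>r < z\<close> \<open>Inf Z \<in> Z\<close> unfolding Z_def z_def by auto
  then show False
    using cInf_lower[OF _ \<open>bdd_below Z\<close>] \<open>q \<le> r\<close> \<open>r < z\<close> unfolding z_def by fastforce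
qed

lemma negative_after_of_deriv_neg_at_zeros:
  fixes g g' :: "real \<Rightarrow> real"
  assumes deriv: "\<And>t. (g has_real_derivative g' t) (at t)"
    and crossing: "\<And>t. g t = 0 \<Longrightarrow> g' t < 0"
    and "g s \<le> 0" "s < t"
  shows "g t < 0"
proof -
  have persists: "g t < 0" if "g q < 0" "q \<le> t" for q
    using negative_persists_of_deriv_neg_at_zeros[of g g' q t] deriv crossing that by blast
  show ?thesis
  proof (cases "g s = 0")
    case True
    obtain d where "d > 0" and right: "\<And>h. 0 < h \<Longrightarrow> h < d \<Longrightarrow> g (s + h) < 0"
      using DERIV_neg_dec_right[OF deriv crossing[OF True]] True by auto
    obtain h where "0 < h" "h < d" "h < t - s"
      using field_lbound_gt_zero[of d "t - s"] \<open>d > 0\<close> \<open>s < t\<close> by auto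
    then show ?thesis
      using persists[of "s + h"] right by simp
  next
    case False
    then show ?thesis
      using persists[of s] \<open>g s \<le> 0\<close> \<open>s < t\<close> by simp
  qed
qed

lemma competitive_product_negative_after:
  fixes x y A B C D :: "real \<Rightarrow> real"
  assumes dx: "\<And>t. (x has_real_derivative A t * x t + B t * y t) (at t)"
    and dy: "\<And>t. (y has_real_derivative C t * x t + D t * y t) (at t)"
    and "\<And>t. B t < 0" "\<And>t. C t < 0"
    and nonvanishing: "\<And>t. x t \<noteq> 0 \<or> y t \<noteq> 0"
    and "x s * y s \<le> 0" "s < t"
  shows "x t * y t < 0"
proof (rule negative_after_of_deriv_neg_at_zeros[where g = "\<lambda>t. x t * y t"])
  show "((\<lambda>t. x t * y t) has_real_derivative (A t + D t) * (x t * y t) + B t * (y t)\<^sup>2 + C t * (x t)\<^sup>2) (at t)" for t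
    by (rule derivative_eq_intros dx dy refl)+ (simp add: algebra_simps power2_eq_square)
  show "(A t + D t) * (x t * y t) + B t * (y t)\<^sup>2 + C t * (x t)\<^sup>2 < 0" if "x t * y t = 0" for t
    using that nonvanishing[of t] \<open>B t < 0\<close> \<open>C t < 0\<close>
    by (auto simp: mult_neg_pos)
qed (use assms in auto)

locale nonneg_periodic_orbit =
  fixes a1 a2 b1 b2 c1 c2 f T :: real and u v :: "real \<Rightarrow> real"
  assumes a1_nonneg: "a1 \<ge> 0" and f_nonneg: "f \<ge> 0" and c1_pos: "c1 > 0" and c2_pos: "c2 > 0"
    and solution: "is_solution a1 a2 b1 b2 c1 c2 f u v"
    and period_pos: "T > 0"
    and u_periodic: "\<And>t. u (t + T) = u t" and v_periodic: "\<And>t. v (t + T) = v t"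
    and nonconstant: "\<exists>t. (u t, v t) \<noteq> (u 0, v 0)"
    and u_nonneg: "\<And>t. u t \<ge> 0" and v_nonneg: "\<And>t. v t \<ge> 0"
begin

definition u' :: "real \<Rightarrow> real" where
  "u' t = Fu a1 b1 c1 f (u t) (v t)"

definition v' :: "real \<Rightarrow> real" where
  "v' t = Fv a2 b2 c2 (u t) (v t)"

lemma has_derivative_u: "(u has_real_derivative u' t) (at t)"
  and has_derivative_v: "(v has_real_derivative v' t) (at t)"
  using solution unfolding is_solution_def u'_def v'_def by blast+

lemma isCont_u: "isCont u t"
  using has_derivative_u by (rule DERIV_isCont)

lemma isCont_v: "isCont v t"
  using has_derivative_v by (rule DERIV_isCont)

lemma u'_periodic: "u' (t + T) = u' t"
  and v'_periodic: "v' (t + T) = v' t"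
  unfolding u'_def v'_def using u_periodic v_periodic by simp_all

lemma denominator_nonzero: "1 + f * v t \<noteq> 0"
proof -
  have "0 \<le> f * v t"
    using f_nonneg v_nonneg by simp
  then show ?thesis
    by linarith
qed

definition jac_uu :: "real \<Rightarrow> real" where
  "jac_uu t = a1 / (1 + f * v t) - 2 * b1 * u t - c1 * v t"

definition jac_uv :: "real \<Rightarrow> real" where
  "jac_uv t = - (a1 * f * u t / (1 + f * v t)\<^sup>2) - c1 * u t"

definition jac_vu :: "real \<Rightarrow> real" where
  "jac_vu t = - (c2 * v t)"

definition jac_vv :: "real \<Rightarrow> real" where
  "jac_vv t = a2 - 2 * b2 * v t - c2 * u t"

lemma has_derivative_u': "(u' has_real_derivative jac_uu t * u' t + jac_uv t * v' t) (at t)"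
proof -
  \<comment> \<open>q is kept opaque so that \<open>field_simps\<close> does not expand the denominator \<open>(1 + f v)\<^sup>2\<close>.\<close>
  define q where "q s = 1 + f * v s" for s
  have dq: "(q has_real_derivative f * v' s) (at s)" for s
    unfolding q_def[abs_def] by (rule derivative_eq_intros has_derivative_v refl)+ simp
  have q0: "q t \<noteq> 0"
    unfolding q_def by (rule denominator_nonzero)
  have "((\<lambda>s. a1 * u s / q s - b1 * (u s)\<^sup>2 - c1 * u s * v s) has_real_derivative
      (a1 / q t - 2 * b1 * u t - c1 * v t) * u' t + (- (a1 * f * u t / (q t)\<^sup>2) - c1 * u t) * v' t) (at t)"
    by (rule derivative_eq_intros dq has_derivative_u has_derivative_v q0 refl)+
      (simp add: q0 field_simps power2_eq_square)
  then show ?thesis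
    by (simp add: u'_def[abs_def] Fu_def jac_uu_def jac_uv_def q_def)
qed

lemma has_derivative_v': "(v' has_real_derivative jac_vu t * u' t + jac_vv t * v' t) (at t)"
proof -
  have "((\<lambda>t. Fv a2 b2 c2 (u t) (v t)) has_real_derivative jac_vu t * u' t + jac_vv t * v' t) (at t)"
    unfolding Fv_def jac_vu_def jac_vv_def
    by (rule derivative_eq_intros has_derivative_u has_derivative_v refl)+
      (simp add: algebra_simps power2_eq_square)
  then show ?thesis
    by (simp add: v'_def[abs_def])
qed

lemma isCont_jacobian:
  "isCont jac_uu t" "isCont jac_uv t" "isCont jac_vu t" "isCont jac_vv t"
  unfolding jac_uu_def[abs_def] jac_uv_def[abs_def] jac_vu_def[abs_def] jac_vv_def[abs_def]
  by (auto intro!: continuous_intros isCont_u isCont_v simp: denominator_nonzero)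

lemma velocity_nonvanishing: "u' t \<noteq> 0 \<or> v' t \<noteq> 0"
proof (rule ccontr)
  assume "\<not> (u' t \<noteq> 0 \<or> v' t \<noteq> 0)"
  then have "u' s = 0 \<and> v' s = 0" for s
    using periodic_linear_system_vanishes[where x = u' and y = v', OF period_pos
        u'_periodic v'_periodic has_derivative_u' has_derivative_v' isCont_jacobian]
    by blast
  then have "u s = u 0" "v s = v 0" for s
    using DERIV_isconst_all has_derivative_u has_derivative_v by metis+
  then show False
    using nonconstant by simp
qed

lemma u_pos: "u t > 0"
proof (rule ccontr)
  assume "\<not> u t > 0"
  then have "u t = 0"
    using u_nonneg[of t] by linarith
  define g where "g s = a1 / (1 + f * v s) - b1 * u s - c1 * v s" for s
  have u'_eq: "u' s = g s * u s" for s
    unfolding u'_def Fu_def g_def by (simp add: denominator_nonzero field_simps power2_eq_square)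
  have "u s = 0" for s
  proof (rule periodic_vanishes_of_linear_bound[where w = u and w' = u' and k = "\<lambda>s. \<bar>g s\<bar>"])
    show "\<bar>u' s\<bar> \<le> \<bar>g s\<bar> * \<bar>u s\<bar>" for s
      by (simp add: u'_eq abs_mult)
    show "isCont (\<lambda>s. \<bar>g s\<bar>) s" for s
      unfolding g_def by (auto intro!: continuous_intros isCont_u isCont_v simp: denominator_nonzero)
  qed (use period_pos u_periodic has_derivative_u \<open>u t = 0\<close> in auto)
  then have "u' s = 0" for s
    by (simp add: u'_eq)
  moreover obtain \<zeta> where "v' \<zeta> = 0"
    using periodic_has_critical_point[OF period_pos v_periodic has_derivative_v] by blast
  ultimately show False
    using velocity_nonvanishing by blast
qed

lemma v_pos: "v t > 0"
proof (rule ccontr)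
  assume "\<not> v t > 0"
  then have "v t = 0"
    using v_nonneg[of t] by linarith
  define g where "g s = a2 - b2 * v s - c2 * u s" for s
  have v'_eq: "v' s = g s * v s" for s
    unfolding v'_def Fv_def g_def by (simp add: algebra_simps power2_eq_square)
  have "v s = 0" for s
  proof (rule periodic_vanishes_of_linear_bound[where w = v and w' = v' and k = "\<lambda>s. \<bar>g s\<bar>"])
    show "\<bar>v' s\<bar> \<le> \<bar>g s\<bar> * \<bar>v s\<bar>" for s
      by (simp add: v'_eq abs_mult)
    show "isCont (\<lambda>s. \<bar>g s\<bar>) s" for s
      unfolding g_def by (auto intro!: continuous_intros isCont_u isCont_v)
  qed (use period_pos v_periodic has_derivative_v \<open>v t = 0\<close> in auto)
  then have "v' s = 0" for s
    by (simp add: v'_eq)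
  moreover obtain \<xi> where "u' \<xi> = 0"
    using periodic_has_critical_point[OF period_pos u_periodic has_derivative_u] by blast
  ultimately show False
    using velocity_nonvanishing by blast
qed

lemma jac_uv_neg: "jac_uv t < 0"
proof -
  have "0 \<le> a1 * f * u t / (1 + f * v t)\<^sup>2"
    using a1_nonneg f_nonneg u_nonneg by simp
  moreover have "0 < c1 * u t"
    using c1_pos u_pos by simp
  ultimately show ?thesis
    unfolding jac_uv_def by linarith
qed

lemma jac_vu_neg: "jac_vu t < 0"
  unfolding jac_vu_def using c2_pos v_pos by simp

theorem impossible: False
proof -
  obtain \<xi> where "u' \<xi> = 0"
    using periodic_has_critical_point[OF period_pos u_periodic has_derivative_u] by blast
  then have "u' t * v' t < 0" if "\<xi> < t" for t
    using competitive_product_negative_after[where x = u' and y = v', OF has_derivative_u'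
        has_derivative_v' jac_uv_neg jac_vu_neg velocity_nonvanishing _ that]
    by simp
  moreover obtain \<zeta> where "\<xi> < \<zeta>" "u' \<zeta> = 0"
    using periodic_has_critical_point[OF period_pos u_periodic has_derivative_u, of \<xi>] by blast
  ultimately show False
    by fastforce
qed

end

theorem mainTheorem10:
  fixes a1 a2 b1 b2 c1 c2 f :: real
  assumes "a1 > 0" "a2 > 0" "b1 > 0" "b2 > 0" "c1 > 0" "c2 > 0" "f \<ge> 0"
  shows "\<not> (\<exists>u v. periodic_orbit a1 a2 b1 b2 c1 c2 f u v \<and> (\<forall>t. u t \<ge> 0 \<and> v t \<ge> 0))"
proof
  assume "\<exists>u v. periodic_orbit a1 a2 b1 b2 c1 c2 f u v \<and> (\<forall>t. u t \<ge> 0 \<and> v t \<ge> 0)"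
  then obtain u v T where "is_solution a1 a2 b1 b2 c1 c2 f u v" "T > 0"
    "\<forall>t. u (t + T) = u t \<and> v (t + T) = v t" "\<exists>t. (u t, v t) \<noteq> (u 0, v 0)"
    "\<forall>t. u t \<ge> 0 \<and> v t \<ge> 0"
    unfolding periodic_orbit_def by blast
  then interpret nonneg_periodic_orbit a1 a2 b1 b2 c1 c2 f T u v
    using assms by unfold_locales auto
  show False
    by (rule impossible)
qed

end
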